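(* Let $n\ge 1$ and $m$ be integers with $n-|m|$ even and non-negative, let $R_n^{|m|}(r)=r^{|m|}\,P^{(0,|m|)}_{\frac{n-|m|}{2}}(2r^2-1)$ for $0\le r\le1$, and let $k\ge1$ be an integer. Put \[ B_{n,k}=\frac{n^2(n^2-1^2)\cdots(n^2-(k-1)^2)}{2^k\,(1/2)_k},\qquad a_n=2\Bigl(\tfrac12\Bigr)^n\binom{n}{\frac{n-|m|}{2}}. \] Then $\max_{0\le r\le1}|(R_n^{|m|})^{(k)}(r)|$ is attained at $r=1$, and \[ a_n\,B_{n,k}\;\le\;(R_n^{|m|})^{(k)}(1)\;\le\;B_{n,k}. \]
   Context: $P_p^{(\alpha,\beta)}$ denotes the Jacobi polynomial of degree $p$ orthogonal with respect to the weight $(1-x)^\alpha(1+x)^\beta$ on $[-1,1]$, with standard normalization $P_p^{(\alpha,\beta)}(1)=\binom{p+\alpha}{p}$. $f^{(k)}$ denotes the $k$-th derivative. $(\alpha)_k=\alpha(\alpha+1)\cdots(\alpha+k-1)$ is the Pochhammer symbol, $(\alpha)_0=1$. *)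

theory Defs
  imports "HOL-Analysis.Analysis"
begin

text \<open>Jacobi polynomial P_p^(alpha,beta)(x), standard normalisation
  P_p^(alpha,beta)(1) = binom(p+alpha, p), via the classical explicit formula
  P_p^(a,b)(x) = sum_{s=0}^p binom(p+a, p-s) binom(p+b, s) ((x-1)/2)^s ((x+1)/2)^(p-s).\<close>
definition jacobiP :: "nat \<Rightarrow> real \<Rightarrow> real \<Rightarrow> real \<Rightarrow> real" where
  "jacobiP p \<alpha> \<beta> x =
     (\<Sum>s\<le>p. ((real p + \<alpha>) gchoose (p - s)) * ((real p + \<beta>) gchoose s)
              * ((x - 1) / 2) ^ s * ((x + 1) / 2) ^ (p - s))"

definition zernikeR :: "nat \<Rightarrow> int \<Rightarrow> real \<Rightarrow> real" where
  "zernikeR n m r = r ^ nat \<bar>m\<bar> *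
     jacobiP (nat ((int n - \<bar>m\<bar>) div 2)) 0 (real (nat \<bar>m\<bar>)) (2 * r\<^sup>2 - 1)"

definition B_const :: "nat \<Rightarrow> nat \<Rightarrow> real" where
  "B_const n k = (\<Prod>j<k. (real n)\<^sup>2 - (real j)\<^sup>2) / (2 ^ k * pochhammer (1/2) k)"

definition a_const :: "nat \<Rightarrow> int \<Rightarrow> real" where
  "a_const n m = 2 * (1/2) ^ n * real (n choose nat ((int n - \<bar>m\<bar>) div 2))"

end

(*
  Put r = (z + 1/z)/2 with z > 0 and w = z^2. Then (2z)^n R_n^m(r) is a polynomial in w whose
  k-th coefficient is K_k(p) K_p(k), a product of Krawtchouk polynomials (p = (n - |m|)/2), and
  it is invariant under w -> 1/w up to the factor w^n. As T_j(r) = (z^j + z^-j)/2, this gives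
  R_n^m = sum_k c_k T_|n-2k| with c_k = K_k(p) K_p(k) / 2^n. The symmetry
  binom(n,k) K_p(k) = binom(n,p) K_k(p) makes every c_k nonnegative; R_n^m(1) = 1 gives
  sum_k c_k = 1, and c_0 + c_n = a_n.

  Nonnegative combinations of Chebyshev polynomials are closed under differentiation
  (T_(j+1)' = (j+1) U_j, and U_j is such a combination) and satisfy |f(x)| <= f(1) on [-1,1].
  Differentiating the Chebyshev equation k times and evaluating at x = 1 gives
  T_j^(k)(1) = prod_(i<k) (j^2 - i^2)/(2i+1), which increases with j and equals B_(n,k) for
  j = n. Both bounds follow, and neither needs k >= 1.
*)
theory Submission
  imports Defs "HOL-Computational_Algebra.Polynomial"
begin

lemma poly_eqI_on_infinite:
  fixes p q :: "'a::idom poly"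
  assumes "infinite S" and "\<And>x. x \<in> S \<Longrightarrow> poly p x = poly q x"
  shows "p = q"
proof (rule ccontr)
  assume "p \<noteq> q"
  then have "finite {x. poly (p - q) x = 0}" by (intro poly_roots_finite) simp
  moreover have "S \<subseteq> {x. poly (p - q) x = 0}" using assms(2) by auto
  ultimately show False using assms(1) finite_subset by blast
qed

lemma real_poly_eqI:
  fixes p q :: "real poly"
  assumes "\<And>x. poly p x = poly q x"
  shows "p = q"
  using poly_eqI_on_infinite[OF infinite_UNIV_char_0] assms by blast

lemma coeff_linear_poly_power':
  fixes a b :: "'a::comm_semiring_1"
  shows "coeff ([:a, b:] ^ N) i = of_nat (N choose i) * b ^ i * a ^ (N - i)"
proof (cases "i \<le> N")
  case False
  have "degree ([:a, b:] ^ N) \<le> degree [:a, b:] * N"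
    by (rule degree_power_le)
  also have "\<dots> \<le> N"
    by (cases "b = 0") simp_all
  finally show ?thesis using False by (simp add: coeff_eq_0 binomial_eq_0)
qed (rule coeff_linear_poly_power)

lemma higher_deriv_poly: "(deriv ^^ k) (poly p) = poly ((pderiv ^^ k) p)"
proof (induction k)
  case (Suc k)
  have "deriv (poly ((pderiv ^^ k) p)) = poly (pderiv ((pderiv ^^ k) p))"
    by (intro ext DERIV_imp_deriv poly_DERIV)
  with Suc show ?case by simp
qed simp

section \<open>Chebyshev polynomials\<close>

fun cheb_T :: "nat \<Rightarrow> real poly" where
  "cheb_T 0 = 1"
| "cheb_T (Suc 0) = [:0, 1:]"
| "cheb_T (Suc (Suc j)) = [:0, 2:] * cheb_T (Suc j) - cheb_T j"

fun cheb_U :: "nat \<Rightarrow> real poly" where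
  "cheb_U 0 = 1"
| "cheb_U (Suc 0) = [:0, 2:]"
| "cheb_U (Suc (Suc j)) = [:0, 2:] * cheb_U (Suc j) - cheb_U j"

lemma poly_cheb_T_Suc_Suc:
  "poly (cheb_T (Suc (Suc j))) x = 2 * x * poly (cheb_T (Suc j)) x - poly (cheb_T j) x"
  by simp

lemma poly_cheb_U_Suc_Suc:
  "poly (cheb_U (Suc (Suc j))) x = 2 * x * poly (cheb_U (Suc j)) x - poly (cheb_U j) x"
  by simp

declare cheb_T.simps(3) [simp del] cheb_U.simps(3) [simp del]

lemma poly_cheb_T_cos: "poly (cheb_T j) (cos t) = cos (real j * t)"
proof (induction j rule: cheb_T.induct)
  case (3 j)
  have "cos (real (Suc (Suc j)) * t) + cos (real j * t) = 2 * cos t * cos (real (Suc j) * t)"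
    using cos_add[of "real (Suc j) * t" t] cos_diff[of "real (Suc j) * t" t]
    by (simp add: algebra_simps)
  then show ?case using 3 by (simp add: poly_cheb_T_Suc_Suc)
qed simp_all

lemma poly_cheb_T_1 [simp]: "poly (cheb_T j) 1 = 1"
  using poly_cheb_T_cos[of j 0] by simp

lemma abs_poly_cheb_T_le_1:
  assumes "\<bar>x\<bar> \<le> 1"
  shows "\<bar>poly (cheb_T j) x\<bar> \<le> 1"
  using poly_cheb_T_cos[of j "arccos x"] assms by (simp add: cos_arccos_abs)

lemma poly_cheb_T_joukowski:
  fixes z :: real
  assumes "z \<noteq> 0"
  shows "poly (cheb_T j) ((z + 1 / z) / 2) = (z ^ j + (1 / z) ^ j) / 2"
proof (induction j rule: cheb_T.induct)
  case (3 j)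
  show ?case
    unfolding poly_cheb_T_Suc_Suc 3 using assms by (simp add: field_simps)
qed simp_all

lemma poly_cheb_T_joukowski_powi:
  fixes z :: real
  assumes "z \<noteq> 0"
  shows "poly (cheb_T (nat \<bar>d\<bar>)) ((z + 1 / z) / 2) = (z powi d + z powi (- d)) / 2"
proof (cases "d \<ge> 0")
  case True
  then show ?thesis
    using poly_cheb_T_joukowski[OF assms, of "nat d"]
    by (simp add: power_int_def power_inverse inverse_eq_divide)
next
  case False
  then show ?thesis
    using poly_cheb_T_joukowski[OF assms, of "nat (- d)"]
    by (simp add: power_int_def power_inverse inverse_eq_divide)
qed

lemma cheb_T_Suc_Suc_eq_cheb_U:
  "cheb_T (Suc (Suc j)) = [:0, 1:] * cheb_U (Suc j) - cheb_U j"
proof (rule real_poly_eqI)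
  fix x
  show "poly (cheb_T (Suc (Suc j))) x = poly ([:0, 1:] * cheb_U (Suc j) - cheb_U j) x"
  proof (induction j rule: cheb_T.induct)
    case (3 j)
    show ?case
      unfolding poly_cheb_T_Suc_Suc[of "Suc (Suc j)"] 3
      by (simp add: poly_cheb_U_Suc_Suc algebra_simps)
  qed (simp_all add: cheb_T.simps(3) cheb_U.simps(3) algebra_simps)
qed

lemma cheb_U_Suc_Suc_eq:
  "cheb_U (Suc (Suc j)) = cheb_U j + smult 2 (cheb_T (Suc (Suc j)))"
  by (rule real_poly_eqI) (simp add: cheb_T_Suc_Suc_eq_cheb_U poly_cheb_U_Suc_Suc algebra_simps)

lemma pderiv_cheb_T: "pderiv (cheb_T (Suc j)) = smult (real (Suc j)) (cheb_U j)"
proof (induction j rule: cheb_T.induct)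
  case (3 j)
  show ?case
  proof (rule real_poly_eqI)
    fix x
    have "poly (pderiv (cheb_T (Suc (Suc (Suc j))))) x
        = 2 * x * poly (pderiv (cheb_T (Suc (Suc j)))) x + 2 * poly (cheb_T (Suc (Suc j))) x
          - poly (pderiv (cheb_T (Suc j))) x"
      by (simp add: cheb_T.simps(3)[of "Suc j"] pderiv_diff pderiv_mult pderiv_pCons pderiv_smult
          algebra_simps)
    also have "\<dots> = 2 * x * ((j + 2) * poly (cheb_U (Suc j)) x)
        + 2 * (x * poly (cheb_U (Suc j)) x - poly (cheb_U j) x) - (j + 1) * poly (cheb_U j) x"
      unfolding 3 by (simp add: cheb_T_Suc_Suc_eq_cheb_U)
    also have "\<dots> = poly (smult (real (Suc (Suc (Suc j)))) (cheb_U (Suc (Suc j)))) x"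
      by (simp add: poly_cheb_U_Suc_Suc algebra_simps)
    finally show "poly (pderiv (cheb_T (Suc (Suc (Suc j))))) x
        = poly (smult (real (Suc (Suc (Suc j)))) (cheb_U (Suc (Suc j)))) x" .
  qed
qed (simp_all add: cheb_T.simps(3) pderiv_diff pderiv_mult pderiv_pCons)

lemma one_minus_sq_mult_cheb_U:
  "[:1, 0, -1:] * cheb_U j = cheb_T j - [:0, 1:] * cheb_T (Suc j)"
proof -
  have "(1 - x\<^sup>2) * poly (cheb_U j) x = poly (cheb_T j) x - x * poly (cheb_T (Suc j)) x" for x
  proof (induction j rule: cheb_T.induct)
    case (3 j)
    have "(1 - x\<^sup>2) * poly (cheb_U (Suc (Suc j))) x
        = 2 * x * ((1 - x\<^sup>2) * poly (cheb_U (Suc j)) x) - (1 - x\<^sup>2) * poly (cheb_U j) x"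
      by (simp add: poly_cheb_U_Suc_Suc algebra_simps)
    also have "\<dots> = 2 * x * (poly (cheb_T (Suc j)) x - x * poly (cheb_T (Suc (Suc j))) x)
        - (poly (cheb_T j) x - x * poly (cheb_T (Suc j)) x)"
      by (simp only: 3)
    also have "\<dots> = poly (cheb_T (Suc (Suc j))) x - x * poly (cheb_T (Suc (Suc (Suc j)))) x"
      by (simp add: poly_cheb_T_Suc_Suc algebra_simps)
    finally show ?case .
  qed (simp_all add: cheb_T.simps(3) cheb_U.simps(3) algebra_simps power2_eq_square)
  then show ?thesis
    by (intro real_poly_eqI) (simp add: algebra_simps power2_eq_square)
qed

lemma one_minus_sq_mult_pderiv_cheb_U:
  "[:1, 0, -1:] * pderiv (cheb_U j) = [:0, 1:] * cheb_U j - smult (real (Suc j)) (cheb_T (Suc j))"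
proof -
  have "(1 - x\<^sup>2) * poly (pderiv (cheb_U j)) x
      = x * poly (cheb_U j) x - (j + 1) * poly (cheb_T (Suc j)) x" for x
  proof (induction j rule: cheb_T.induct)
    case (3 j)
    have U: "(1 - x\<^sup>2) * poly (cheb_U (Suc j)) x
        = poly (cheb_T (Suc j)) x - x * poly (cheb_T (Suc (Suc j))) x"
      using arg_cong[OF one_minus_sq_mult_cheb_U[of "Suc j"], of "\<lambda>p. poly p x"]
      by (simp add: algebra_simps power2_eq_square)
    have "(1 - x\<^sup>2) * poly (pderiv (cheb_U (Suc (Suc j)))) x
        = 2 * x * ((1 - x\<^sup>2) * poly (pderiv (cheb_U (Suc j))) x)
          + 2 * ((1 - x\<^sup>2) * poly (cheb_U (Suc j)) x) - (1 - x\<^sup>2) * poly (pderiv (cheb_U j)) x"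
      by (simp add: cheb_U.simps(3)[of j] pderiv_diff pderiv_mult pderiv_pCons pderiv_smult
          algebra_simps)
    also have "\<dots> = 2 * x * (x * poly (cheb_U (Suc j)) x - (j + 2) * poly (cheb_T (Suc (Suc j))) x)
        + 2 * (poly (cheb_T (Suc j)) x - x * poly (cheb_T (Suc (Suc j))) x)
        - (x * poly (cheb_U j) x - (j + 1) * poly (cheb_T (Suc j)) x)"
      unfolding U 3 by simp
    also have "\<dots> = x * poly (cheb_U (Suc (Suc j))) x - (j + 3) * poly (cheb_T (Suc (Suc (Suc j)))) x"
      by (simp add: poly_cheb_T_Suc_Suc poly_cheb_U_Suc_Suc algebra_simps)
    finally show ?case by simp
  qed (simp_all add: cheb_T.simps(3) cheb_U.simps(3) pderiv_pCons algebra_simps power2_eq_square)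
  then show ?thesis
    by (intro real_poly_eqI) (simp add: algebra_simps power2_eq_square)
qed

definition chebyshev_type_ode :: "real \<Rightarrow> real \<Rightarrow> real poly \<Rightarrow> bool" where
  "chebyshev_type_ode a b f \<longleftrightarrow>
     [:1, 0, -1:] * pderiv (pderiv f) - smult a ([:0, 1:] * pderiv f) + smult b f = 0"

lemma chebyshev_type_ode_cheb_T: "chebyshev_type_ode 1 (real j ^ 2) (cheb_T j)"
  unfolding chebyshev_type_ode_def
proof (cases j)
  case (Suc i)
  show "[:1, 0, -1:] * pderiv (pderiv (cheb_T j)) - smult 1 ([:0, 1:] * pderiv (cheb_T j))
      + smult (real j ^ 2) (cheb_T j) = 0"
    unfolding Suc pderiv_cheb_T pderiv_smult mult_smult_right one_minus_sq_mult_pderiv_cheb_U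
    by (simp add: algebra_simps power2_eq_square smult_diff_right)
qed simp

lemma chebyshev_type_ode_pderiv:
  assumes "chebyshev_type_ode a b f"
  shows "chebyshev_type_ode (a + 2) (b - a) (pderiv f)"
proof -
  have d1: "pderiv ([:1, 0, -1:] * g) = [:1, 0, -1:] * pderiv g - smult 2 ([:0, 1:] * g)"
    for g :: "real poly"
    unfolding pderiv_mult by (rule real_poly_eqI) (simp add: pderiv_pCons algebra_simps)
  have d2: "pderiv ([:0, 1:] * g) = g + [:0, 1:] * pderiv g" for g :: "real poly"
    by (simp add: pderiv_mult pderiv_pCons)
  have "pderiv ([:1, 0, -1:] * pderiv (pderiv f) - smult a ([:0, 1:] * pderiv f) + smult b f) = 0"
    using assms unfolding chebyshev_type_ode_def by simp
  then have "[:1, 0, -1:] * pderiv (pderiv (pderiv f)) - smult 2 ([:0, 1:] * pderiv (pderiv f))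
      - smult a (pderiv f + [:0, 1:] * pderiv (pderiv f)) + smult b (pderiv f) = 0"
    by (simp only: pderiv_add pderiv_diff pderiv_smult d1 d2)
  then show ?thesis
    unfolding chebyshev_type_ode_def
    by (simp add: algebra_simps smult_add_left smult_diff_left smult_add_right smult_diff_right)
qed

lemma chebyshev_type_ode_at_1:
  assumes "chebyshev_type_ode a b f"
  shows "a * poly (pderiv f) 1 = b * poly f 1"
  using arg_cong[OF assms[unfolded chebyshev_type_ode_def], of "\<lambda>p. poly p 1"] by simp

lemma chebyshev_type_ode_higher_pderiv_cheb_T:
  "chebyshev_type_ode (2 * real k + 1) (real j ^ 2 - real k ^ 2) ((pderiv ^^ k) (cheb_T j))"
proof (induction k)
  case 0
  show ?case using chebyshev_type_ode_cheb_T by simp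
next
  case (Suc k)
  from chebyshev_type_ode_pderiv[OF this] show ?case
    by (simp add: algebra_simps power2_eq_square)
qed

lemma poly_higher_pderiv_cheb_T_1:
  "poly ((pderiv ^^ k) (cheb_T j)) 1 = (\<Prod>i<k. (real j ^ 2 - real i ^ 2) / (2 * real i + 1))"
proof (induction k)
  case (Suc k)
  have "(2 * real k + 1) * poly ((pderiv ^^ Suc k) (cheb_T j)) 1
      = (real j ^ 2 - real k ^ 2) * poly ((pderiv ^^ k) (cheb_T j)) 1"
    using chebyshev_type_ode_at_1[OF chebyshev_type_ode_higher_pderiv_cheb_T] by simp
  then show ?case
    using Suc by (simp add: field_simps)
qed simp

lemma B_const_eq_higher_pderiv_cheb_T_1: "B_const n k = poly ((pderiv ^^ k) (cheb_T n)) 1"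
proof -
  have "2 ^ k * pochhammer (1 / 2) k = (\<Prod>i<k. 2 * real i + 1)"
    by (induction k) (simp_all add: pochhammer_Suc field_simps)
  then show ?thesis
    unfolding B_const_def poly_higher_pderiv_cheb_T_1 by (simp add: prod_dividef)
qed

inductive chebyshev_cone :: "real poly \<Rightarrow> bool" where
  zero: "chebyshev_cone 0"
| cheb_T: "chebyshev_cone (cheb_T j)"
| add: "chebyshev_cone p \<Longrightarrow> chebyshev_cone q \<Longrightarrow> chebyshev_cone (p + q)"
| smult: "c \<ge> 0 \<Longrightarrow> chebyshev_cone p \<Longrightarrow> chebyshev_cone (smult c p)"

lemma chebyshev_cone_sum: "(\<And>a. a \<in> A \<Longrightarrow> chebyshev_cone (f a)) \<Longrightarrow> chebyshev_cone (sum f A)"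
  by (induction A rule: infinite_finite_induct) (auto intro: chebyshev_cone.intros)

lemma abs_poly_le_poly_1_if_chebyshev_cone:
  assumes "chebyshev_cone p" and "\<bar>x\<bar> \<le> 1"
  shows "\<bar>poly p x\<bar> \<le> poly p 1"
  using assms(1)
proof (induction p rule: chebyshev_cone.induct)
  case (cheb_T j)
  show ?case using abs_poly_cheb_T_le_1[OF assms(2)] by simp
next
  case (add p q)
  then show ?case using abs_triangle_ineq[of "poly p x" "poly q x"] by simp
next
  case (smult c p)
  then show ?case by (simp add: abs_mult mult_left_mono)
qed simp

lemma chebyshev_cone_cheb_U: "chebyshev_cone (cheb_U j)"
proof (induction j rule: cheb_U.induct)
  case 1
  show ?case using chebyshev_cone.cheb_T[of 0] by simp
next
  case 2
  show ?case using chebyshev_cone.smult[of 2, OF _ chebyshev_cone.cheb_T[of 1]] by simp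
next
  case (3 j)
  then show ?case
    unfolding cheb_U_Suc_Suc_eq by (intro chebyshev_cone.intros) auto
qed

lemma chebyshev_cone_pderiv: "chebyshev_cone p \<Longrightarrow> chebyshev_cone (pderiv p)"
proof (induction p rule: chebyshev_cone.induct)
  case (cheb_T j)
  show ?case
    by (cases j) (auto simp: pderiv_cheb_T intro: chebyshev_cone.intros chebyshev_cone_cheb_U)
qed (auto simp: pderiv_add pderiv_smult intro: chebyshev_cone.intros)

lemma chebyshev_cone_higher_pderiv: "chebyshev_cone p \<Longrightarrow> chebyshev_cone ((pderiv ^^ k) p)"
  by (induction k) (auto intro: chebyshev_cone_pderiv)

lemma higher_pderiv_cheb_T_1_nonneg: "0 \<le> poly ((pderiv ^^ k) (cheb_T j)) 1"
  using abs_poly_le_poly_1_if_chebyshev_cone[OF chebyshev_cone_higher_pderiv, of "cheb_T j" 1]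
  by (simp add: chebyshev_cone.cheb_T)

(* For j < k the product contains the factor j^2 - j^2 = 0. *)
lemma higher_pderiv_cheb_T_1_mono:
  assumes "j \<le> j'"
  shows "poly ((pderiv ^^ k) (cheb_T j)) 1 \<le> poly ((pderiv ^^ k) (cheb_T j')) 1"
proof (cases "k \<le> j")
  case True
  then show ?thesis
    unfolding poly_higher_pderiv_cheb_T_1 using assms
    by (intro prod_mono) (auto intro!: divide_right_mono power_mono)
next
  case False
  then have "poly ((pderiv ^^ k) (cheb_T j)) 1 = 0"
    unfolding poly_higher_pderiv_cheb_T_1 by (intro prod_zero) auto
  then show ?thesis using higher_pderiv_cheb_T_1_nonneg by simp
qed

lemma higher_pderiv_cheb_sum_1_le:
  assumes "\<And>i. i \<in> I \<Longrightarrow> 0 \<le> c i" and "\<And>i. i \<in> I \<Longrightarrow> d i \<le> n"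
  shows "poly ((pderiv ^^ k) (\<Sum>i\<in>I. smult (c i) (cheb_T (d i)))) 1
      \<le> sum c I * poly ((pderiv ^^ k) (cheb_T n)) 1"
  unfolding higher_pderiv_sum higher_pderiv_smult poly_sum poly_smult sum_distrib_right
  by (intro sum_mono mult_left_mono higher_pderiv_cheb_T_1_mono) (simp_all add: assms)

lemma higher_pderiv_cheb_sum_1_ge:
  assumes "finite I" and "J \<subseteq> I" and "\<And>i. i \<in> I \<Longrightarrow> 0 \<le> c i"
    and "\<And>i. i \<in> J \<Longrightarrow> d i = n"
  shows "sum c J * poly ((pderiv ^^ k) (cheb_T n)) 1
      \<le> poly ((pderiv ^^ k) (\<Sum>i\<in>I. smult (c i) (cheb_T (d i)))) 1"
proof -
  have "sum c J * poly ((pderiv ^^ k) (cheb_T n)) 1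
      = (\<Sum>i\<in>J. c i * poly ((pderiv ^^ k) (cheb_T (d i))) 1)"
    using assms(4) by (simp add: sum_distrib_right)
  also have "\<dots> \<le> (\<Sum>i\<in>I. c i * poly ((pderiv ^^ k) (cheb_T (d i))) 1)"
    using assms(1-3) higher_pderiv_cheb_T_1_nonneg by (intro sum_mono2) simp_all
  finally show ?thesis
    by (simp add: higher_pderiv_sum higher_pderiv_smult poly_sum)
qed

section \<open>Krawtchouk polynomials\<close>

definition krawtchouk :: "nat \<Rightarrow> nat \<Rightarrow> nat \<Rightarrow> real" where
  "krawtchouk n i x = coeff ([:1, 1:] ^ (n - x) * [:1, -1:] ^ x) i"

lemma krawtchouk_eq_sum:
  "krawtchouk n i x = (\<Sum>j\<le>i. (-1) ^ j * real (x choose j) * real ((n - x) choose (i - j)))"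
  unfolding krawtchouk_def mult.commute[of "[:1, 1:] ^ (n - x)"] coeff_mult coeff_linear_poly_power'
  by (simp add: mult_ac)

lemma krawtchouk_0_left: "krawtchouk n 0 x = 1"
  by (simp add: krawtchouk_def flip: poly_0_coeff_0)

lemma krawtchouk_0_right: "krawtchouk n i 0 = real (n choose i)"
  by (simp add: krawtchouk_def coeff_linear_poly_power')

lemma krawtchouk_n_right: "krawtchouk n i n = (-1) ^ i * real (n choose i)"
  by (simp add: krawtchouk_def coeff_linear_poly_power')

lemma choose_mult_choose_commute:
  "(N choose a) * ((N - a) choose b) = (N choose b) * ((N - b) choose a)"
proof (cases "a + b \<le> N")
  case True
  have "(N choose a) * ((N - a) choose b) = (N choose (a + b)) * ((a + b) choose a)"
    using choose_mult[of a "a + b" N] True by simp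
  also have "(a + b) choose a = (a + b) choose b"
    using binomial_symmetric[of a "a + b"] by simp
  also have "(N choose (a + b)) * \<dots> = (N choose b) * ((N - b) choose a)"
    using choose_mult[of b "a + b" N] True by simp
  finally show ?thesis .
next
  case False
  then have "(N choose a) * ((N - a) choose b) = 0" and "(N choose b) * ((N - b) choose a) = 0"
    by (simp_all add: binomial_eq_0_iff) arith+
  then show ?thesis by (simp only:)
qed

lemma choose_mult_trinomial:
  assumes "j \<le> x" "j \<le> i" "x \<le> n" "i \<le> n"
  shows "(n choose x) * (x choose j) * ((n - x) choose (i - j))
       = (n choose i) * (i choose j) * ((n - i) choose (x - j))"
proof -
  have "n - x = (n - j) - (x - j)" and "n - i = (n - j) - (i - j)" using assms by auto
  then show ?thesis
    using choose_mult[of j x n] choose_mult[of j i n] assms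
      choose_mult_choose_commute[of "n - j" "x - j" "i - j"]
    by (simp add: mult.assoc)
qed

lemma krawtchouk_symmetry:
  assumes "x \<le> n" "i \<le> n"
  shows "real (n choose x) * krawtchouk n i x = real (n choose i) * krawtchouk n x i"
proof -
  define S where "S = {j. j \<le> i \<and> j \<le> x}"
  have "real (n choose x) * krawtchouk n i x
      = (\<Sum>j\<le>i. (-1) ^ j * real ((n choose x) * (x choose j) * ((n - x) choose (i - j))))"
    by (simp add: krawtchouk_eq_sum sum_distrib_left mult_ac)
  also have "\<dots> = (\<Sum>j\<in>S. (-1) ^ j * real ((n choose x) * (x choose j) * ((n - x) choose (i - j))))"
    by (rule sum.mono_neutral_right) (auto simp: S_def)
  also have "\<dots> = (\<Sum>j\<in>S. (-1) ^ j * real ((n choose i) * (i choose j) * ((n - i) choose (x - j))))"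
    using choose_mult_trinomial assms by (intro sum.cong) (auto simp: S_def)
  also have "\<dots> = (\<Sum>j\<le>x. (-1) ^ j * real ((n choose i) * (i choose j) * ((n - i) choose (x - j))))"
    by (rule sum.mono_neutral_left) (auto simp: S_def)
  also have "\<dots> = real (n choose i) * krawtchouk n x i"
    by (simp add: krawtchouk_eq_sum sum_distrib_left mult_ac)
  finally show ?thesis .
qed

lemma krawtchouk_generating_function:
  assumes "x \<le> n"
  shows "(\<Sum>k\<le>n. krawtchouk n k x * y ^ k) = (1 + y) ^ (n - x) * (1 - y) ^ x"
proof -
  let ?E = "[:1, 1:] ^ (n - x) * [:1, -1:] ^ x :: real poly"
  have "degree ?E \<le> degree ([:1, 1:] ^ (n - x) :: real poly) + degree ([:1, -1:] ^ x :: real poly)"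
    by (rule degree_mult_le)
  also have "\<dots> \<le> n"
    using assms degree_power_le[of "[:1, 1::real:]" "n - x"] degree_power_le[of "[:1, -1::real:]" x]
    by simp
  finally have "(\<Sum>k\<le>n. monom (coeff ?E k) k) = ?E"
    by (rule poly_as_sum_of_monoms')
  from arg_cong[OF this, of "\<lambda>q. poly q y"] show ?thesis
    by (simp add: krawtchouk_def poly_sum poly_monom algebra_simps)
qed

section \<open>Chebyshev expansion of the radial Zernike polynomials\<close>

(* R_n^m for M = |m| and p = (n - |m|)/2, written out from the explicit Jacobi formula. *)
definition zernike_poly :: "nat \<Rightarrow> nat \<Rightarrow> real poly" where
  "zernike_poly M p = (\<Sum>s\<le>p. smult (real (p choose s) * real ((p + M) choose s))
      ([:-1, 0, 1:] ^ s * [:0, 0, 1:] ^ (p - s) * [:0, 1:] ^ M))"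

lemma poly_zernike_poly:
  "poly (zernike_poly M p) r
     = (\<Sum>s\<le>p. real (p choose s) * real ((p + M) choose s) * (r\<^sup>2 - 1) ^ s * (r\<^sup>2) ^ (p - s) * r ^ M)"
  by (simp add: zernike_poly_def poly_sum power2_eq_square mult_ac)

lemma zernikeR_eq_poly_zernike_poly:
  "zernikeR n m = poly (zernike_poly (nat \<bar>m\<bar>) (nat ((int n - \<bar>m\<bar>) div 2)))"
proof
  fix r
  define M where "M = nat \<bar>m\<bar>"
  define p where "p = nat ((int n - \<bar>m\<bar>) div 2)"
  have "zernikeR n m r = (\<Sum>s\<le>p. r ^ M
      * (((real p + 0) gchoose (p - s)) * ((real p + real M) gchoose s)
      * ((2 * r\<^sup>2 - 1 - 1) / 2) ^ s * ((2 * r\<^sup>2 - 1 + 1) / 2) ^ (p - s)))"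
    unfolding zernikeR_def jacobiP_def M_def p_def sum_distrib_left ..
  also have "\<dots> = poly (zernike_poly M p) r"
    unfolding poly_zernike_poly
  proof (intro sum.cong refl)
    fix s
    assume "s \<in> {..p}"
    then have g1: "(real p + 0) gchoose (p - s) = real (p choose s)"
      by (simp add: binomial_gbinomial[symmetric] binomial_symmetric[symmetric])
    have g2: "(real p + real M) gchoose s = real ((p + M) choose s)"
      by (simp add: binomial_gbinomial)
    have x1: "(2 * r\<^sup>2 - 1 - 1) / 2 = r\<^sup>2 - 1" and x2: "(2 * r\<^sup>2 - 1 + 1) / 2 = r\<^sup>2"
      by simp_all
    show "r ^ M * (((real p + 0) gchoose (p - s)) * ((real p + real M) gchoose s)
        * ((2 * r\<^sup>2 - 1 - 1) / 2) ^ s * ((2 * r\<^sup>2 - 1 + 1) / 2) ^ (p - s))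
      = real (p choose s) * real ((p + M) choose s) * (r\<^sup>2 - 1) ^ s * (r\<^sup>2) ^ (p - s) * r ^ M"
      unfolding g1 g2 x1 x2 by (simp add: mult_ac)
  qed
  finally show "zernikeR n m r = poly (zernike_poly M p) r" .
qed

(* (2z)^n R_n^m((z + 1/z)/2) as a function of w = z^2. *)
definition zernike_joukowski :: "nat \<Rightarrow> nat \<Rightarrow> real \<Rightarrow> real" where
  "zernike_joukowski M p w = (\<Sum>s\<le>p. real (p choose s) * real ((p + M) choose s)
      * ((w - 1)\<^sup>2) ^ s * ((w + 1)\<^sup>2) ^ (p - s) * (w + 1) ^ M)"

lemma zernike_poly_joukowski:
  fixes z :: real
  assumes "z > 0"
  shows "(2 * z) ^ (M + 2 * p) * poly (zernike_poly M p) ((z + 1 / z) / 2)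
    = zernike_joukowski M p (z\<^sup>2)"
proof -
  define r where "r = (z + 1 / z) / 2"
  show ?thesis
    unfolding poly_zernike_poly zernike_joukowski_def sum_distrib_left r_def[symmetric]
  proof (intro sum.cong refl)
    fix s
    assume "s \<in> {..p}"
    then have "M + 2 * p = 2 * s + 2 * (p - s) + M" by simp
    then have power_split:
        "(2 * z) ^ (M + 2 * p) = ((2 * z)\<^sup>2) ^ s * ((2 * z)\<^sup>2) ^ (p - s) * (2 * z) ^ M"
      by (simp only: power_add power_mult)
    have zr: "2 * z * r = z\<^sup>2 + 1"
      using assms by (simp add: r_def field_simps power2_eq_square)
    have sq: "(2 * z)\<^sup>2 * r\<^sup>2 = (z\<^sup>2 + 1)\<^sup>2"
      unfolding power_mult_distrib[symmetric] zr ..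
    have sq_minus_1: "(2 * z)\<^sup>2 * (r\<^sup>2 - 1) = (z\<^sup>2 - 1)\<^sup>2"
      using sq by (simp add: algebra_simps power2_eq_square)
    have "(2 * z) ^ (M + 2 * p) * (real (p choose s) * real ((p + M) choose s)
          * (r\<^sup>2 - 1) ^ s * (r\<^sup>2) ^ (p - s) * r ^ M)
        = real (p choose s) * real ((p + M) choose s)
          * ((2 * z)\<^sup>2 * (r\<^sup>2 - 1)) ^ s * ((2 * z)\<^sup>2 * r\<^sup>2) ^ (p - s) * (2 * z * r) ^ M"
      unfolding power_split unfolding power_mult_distrib by (simp only: mult_ac)
    then show "(2 * z) ^ (M + 2 * p) * (real (p choose s) * real ((p + M) choose s)
          * (r\<^sup>2 - 1) ^ s * (r\<^sup>2) ^ (p - s) * r ^ M)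
        = real (p choose s) * real ((p + M) choose s)
          * ((z\<^sup>2 - 1)\<^sup>2) ^ s * ((z\<^sup>2 + 1)\<^sup>2) ^ (p - s) * (z\<^sup>2 + 1) ^ M"
      unfolding sq zr sq_minus_1 .
  qed
qed

(* Both sides are the coefficient of t^p in ((1 + w) + (1 - w) t)^(p+M) ((1 - w) + (1 + w) t)^p;
   for the right-hand side substitute y = w (1 - t)/(1 + t) in the generating function. *)
lemma zernike_joukowski_eq_krawtchouk:
  fixes M p :: nat
  defines "n \<equiv> M + 2 * p"
  shows "zernike_joukowski M p w = (\<Sum>k\<le>n. krawtchouk n k p * krawtchouk n p k * w ^ k)"
proof -
  define P where
    "P = (\<Sum>k\<le>n. smult (krawtchouk n k p * w ^ k) ([:1, 1:] ^ (n - k) * [:1, -1:] ^ k))"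
  have "(\<Sum>k\<le>n. krawtchouk n k p * krawtchouk n p k * w ^ k) = coeff P p"
    unfolding P_def coeff_sum coeff_smult krawtchouk_def[of n p] by (simp add: mult_ac)
  also have "P = [:1 + w, 1 - w:] ^ (p + M) * [:1 - w, 1 + w:] ^ p"
  proof (rule poly_eqI_on_infinite[of "{0::real<..}"])
    show "infinite {0::real<..}" by (rule infinite_Ioi)
  next
    fix t :: real
    assume "t \<in> {0<..}"
    then have t: "1 + t \<noteq> 0" by simp
    define y where "y = w * (1 - t) / (1 + t)"
    have plus_y: "(1 + t) * (1 + y) = 1 + w + t * (1 - w)"
      and minus_y: "(1 + t) * (1 - y) = 1 - w + t * (1 + w)"
      using t by (simp_all add: y_def field_simps)
    have "poly P t = (\<Sum>k\<le>n. krawtchouk n k p * ((1 + t) ^ (n - k) * (w * (1 - t)) ^ k))"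
      unfolding P_def poly_sum by (simp add: power_mult_distrib mult_ac)
    also have "\<dots> = (1 + t) ^ n * (\<Sum>k\<le>n. krawtchouk n k p * y ^ k)"
      unfolding sum_distrib_left y_def
      using t by (intro sum.cong refl) (simp add: power_divide power_diff field_simps)
    also have "\<dots> = (1 + t) ^ ((p + M) + p) * ((1 + y) ^ (p + M) * (1 - y) ^ p)"
      using krawtchouk_generating_function[of p n]
      by (simp add: n_def add.commute add.left_commute mult_2)
    also have "\<dots> = ((1 + t) * (1 + y)) ^ (p + M) * ((1 + t) * (1 - y)) ^ p"
      by (simp only: power_add power_mult_distrib mult_ac)
    also have "\<dots> = poly ([:1 + w, 1 - w:] ^ (p + M) * [:1 - w, 1 + w:] ^ p) t"
      unfolding plus_y minus_y by simp
    finally show "poly P t = poly ([:1 + w, 1 - w:] ^ (p + M) * [:1 - w, 1 + w:] ^ p) t" .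
  qed
  also have "coeff \<dots> p = zernike_joukowski M p w"
    unfolding zernike_joukowski_def coeff_mult coeff_linear_poly_power'
  proof (intro sum.cong refl)
    fix s
    assume "s \<in> {..p}"
    then have s: "s \<le> p" by simp
    have c: "p choose (p - s) = p choose s"
      using s by (rule binomial_symmetric[symmetric])
    have e1: "(1 - w) ^ s * (1 - w) ^ (p - (p - s)) = ((w - 1)\<^sup>2) ^ s"
      using s by (simp add: power_mult_distrib[symmetric] power2_eq_square algebra_simps)
    have e2: "(1 + w) ^ (p + M - s) * (1 + w) ^ (p - s) = ((w + 1)\<^sup>2) ^ (p - s) * (w + 1) ^ M"
    proof -
      have "p + M - s = (p - s) + M" using s by simp
      then show ?thesis
        by (simp only: power_add power2_eq_square power_mult_distrib add.commute[of 1 w] mult_ac)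
    qed
    have "real ((p + M) choose s) * (1 - w) ^ s * (1 + w) ^ (p + M - s)
        * (real (p choose (p - s)) * (1 + w) ^ (p - s) * (1 - w) ^ (p - (p - s)))
      = real (p choose s) * real ((p + M) choose s) * ((1 - w) ^ s * (1 - w) ^ (p - (p - s)))
        * ((1 + w) ^ (p + M - s) * (1 + w) ^ (p - s))"
      unfolding c by (simp only: mult_ac)
    then show "real ((p + M) choose s) * (1 - w) ^ s * (1 + w) ^ (p + M - s)
        * (real (p choose (p - s)) * (1 + w) ^ (p - s) * (1 - w) ^ (p - (p - s)))
      = real (p choose s) * real ((p + M) choose s) * ((w - 1)\<^sup>2) ^ s * ((w + 1)\<^sup>2) ^ (p - s) * (w + 1) ^ M"
      unfolding e1 e2 by (simp only: mult_ac)
  qed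
  finally show ?thesis ..
qed

lemma zernike_joukowski_reciprocal:
  assumes "w \<noteq> 0"
  shows "w ^ (M + 2 * p) * zernike_joukowski M p (1 / w) = zernike_joukowski M p w"
  unfolding zernike_joukowski_def sum_distrib_left
proof (intro sum.cong refl)
  fix s
  assume "s \<in> {..p}"
  then have "M + 2 * p = 2 * s + 2 * (p - s) + M" by simp
  then have "w ^ (M + 2 * p) = (w\<^sup>2) ^ s * (w\<^sup>2) ^ (p - s) * w ^ M"
    by (simp only: power_add power_mult)
  moreover have "w\<^sup>2 * (1 / w - 1)\<^sup>2 = (w - 1)\<^sup>2" and "w\<^sup>2 * (1 / w + 1)\<^sup>2 = (w + 1)\<^sup>2"
    and "w * (1 / w + 1) = w + 1"
    using assms by (simp_all add: power2_eq_square field_simps)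
  ultimately show "w ^ (M + 2 * p) * (real (p choose s) * real ((p + M) choose s)
        * ((1 / w - 1)\<^sup>2) ^ s * ((1 / w + 1)\<^sup>2) ^ (p - s) * (1 / w + 1) ^ M)
      = real (p choose s) * real ((p + M) choose s)
        * ((w - 1)\<^sup>2) ^ s * ((w + 1)\<^sup>2) ^ (p - s) * (w + 1) ^ M"
    by (simp add: power_mult_distrib[symmetric] mult_ac)
qed

lemma zernike_joukowski_eq_krawtchouk_reversed:
  fixes M p :: nat
  assumes "w \<noteq> 0"
  defines "n \<equiv> M + 2 * p"
  shows "zernike_joukowski M p w = (\<Sum>k\<le>n. krawtchouk n k p * krawtchouk n p k * w ^ (n - k))"
proof -
  have "zernike_joukowski M p w = w ^ n * zernike_joukowski M p (1 / w)"
    using zernike_joukowski_reciprocal[OF assms(1)] by (simp add: n_def)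
  also have "\<dots> = (\<Sum>k\<le>n. krawtchouk n k p * krawtchouk n p k * (w ^ n * (1 / w) ^ k))"
    unfolding zernike_joukowski_eq_krawtchouk n_def sum_distrib_left by (simp add: mult_ac)
  also have "\<dots> = (\<Sum>k\<le>n. krawtchouk n k p * krawtchouk n p k * w ^ (n - k))"
    using assms(1) by (intro sum.cong refl) (simp add: power_diff power_one_over field_simps)
  finally show ?thesis .
qed

definition zernike_cheb_coeff :: "nat \<Rightarrow> nat \<Rightarrow> nat \<Rightarrow> real" where
  "zernike_cheb_coeff n p k = krawtchouk n k p * krawtchouk n p k / 2 ^ n"

definition zernike_cheb :: "nat \<Rightarrow> nat \<Rightarrow> real poly" where
  "zernike_cheb n p =
     (\<Sum>k\<le>n. smult (zernike_cheb_coeff n p k) (cheb_T (nat \<bar>int n - 2 * int k\<bar>)))"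

lemma zernike_cheb_joukowski:
  fixes z :: real
  assumes "z > 0"
  shows "(2 * z) ^ (M + 2 * p) * poly (zernike_cheb (M + 2 * p) p) ((z + 1 / z) / 2)
    = zernike_joukowski M p (z\<^sup>2)"
proof -
  define n where "n = M + 2 * p"
  define a where "a k = krawtchouk n k p * krawtchouk n p k" for k
  have powers: "z ^ n * z powi (int n - 2 * int k) = (z\<^sup>2) ^ (n - k)"
    "z ^ n * z powi (- (int n - 2 * int k)) = (z\<^sup>2) ^ k" if "k \<le> n" for k
  proof -
    have add: "z powi (int n + e) = z ^ n * z powi e" for e
      using power_int_add[of z "int n" e] assms by simp
    have "z ^ n * z powi (int n - 2 * int k) = z powi (int n + (int n - 2 * int k))"
      and "z ^ n * z powi (- (int n - 2 * int k)) = z powi (int n + (- (int n - 2 * int k)))"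
      unfolding add by (rule refl)+
    moreover have "int n + (int n - 2 * int k) = int (2 * (n - k))"
      and "int n + (- (int n - 2 * int k)) = int (2 * k)"
      using that by simp_all
    ultimately show "z ^ n * z powi (int n - 2 * int k) = (z\<^sup>2) ^ (n - k)"
      "z ^ n * z powi (- (int n - 2 * int k)) = (z\<^sup>2) ^ k"
      by (simp_all only: power_int_of_nat power_mult)
  qed
  have "(2 * z) ^ n * poly (zernike_cheb n p) ((z + 1 / z) / 2)
      = (\<Sum>k\<le>n. a k * (z ^ n * z powi (int n - 2 * int k) + z ^ n * z powi (- (int n - 2 * int k))) / 2)"
    unfolding zernike_cheb_def poly_sum poly_smult sum_distrib_left
      poly_cheb_T_joukowski_powi[OF less_imp_neq[OF assms, symmetric]]
    by (intro sum.cong refl) (simp add: zernike_cheb_coeff_def a_def power_mult_distrib field_simps)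
  also have "\<dots> = (\<Sum>k\<le>n. a k * (z\<^sup>2) ^ (n - k) + a k * (z\<^sup>2) ^ k) / 2"
    unfolding sum_divide_distrib
  proof (intro sum.cong refl)
    fix k
    assume "k \<in> {..n}"
    then have "k \<le> n" by simp
    then show "a k * (z ^ n * z powi (int n - 2 * int k) + z ^ n * z powi (- (int n - 2 * int k))) / 2
        = (a k * (z\<^sup>2) ^ (n - k) + a k * (z\<^sup>2) ^ k) / 2"
      unfolding powers[OF \<open>k \<le> n\<close>] by (simp add: algebra_simps)
  qed
  also have "\<dots> = ((\<Sum>k\<le>n. a k * (z\<^sup>2) ^ (n - k)) + (\<Sum>k\<le>n. a k * (z\<^sup>2) ^ k)) / 2"
    by (simp add: sum.distrib)
  also have "\<dots> = zernike_joukowski M p (z\<^sup>2)"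
    using assms zernike_joukowski_eq_krawtchouk[of M p]
      zernike_joukowski_eq_krawtchouk_reversed[of "z\<^sup>2" M p]
    by (simp add: a_def n_def)
  finally show ?thesis unfolding n_def .
qed

lemma joukowski_surjective:
  fixes r :: real
  assumes "r \<ge> 1"
  obtains z where "z > 0" and "r = (z + 1 / z) / 2"
proof
  define z where "z = r + sqrt (r\<^sup>2 - 1)"
  have "1 \<le> r\<^sup>2" using assms by (simp add: one_le_power)
  then have s: "sqrt (r\<^sup>2 - 1) ^ 2 = r\<^sup>2 - 1" by simp
  show "z > 0" using assms by (simp add: z_def add_pos_nonneg)
  then have "1 / z = r - sqrt (r\<^sup>2 - 1)"
    using s by (simp add: z_def field_simps power2_eq_square)
  then show "r = (z + 1 / z) / 2" by (simp add: z_def)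
qed

lemma zernike_poly_eq_zernike_cheb: "zernike_poly M p = zernike_cheb (M + 2 * p) p"
proof (rule poly_eqI_on_infinite[of "{1::real..}"])
  show "infinite {1::real..}" by (rule infinite_Ici)
next
  fix r :: real
  assume "r \<in> {1..}"
  then obtain z where z: "z > 0" and r: "r = (z + 1 / z) / 2"
    using joukowski_surjective by auto
  have "(2 * z) ^ (M + 2 * p) * poly (zernike_poly M p) r
      = (2 * z) ^ (M + 2 * p) * poly (zernike_cheb (M + 2 * p) p) r"
    unfolding r zernike_poly_joukowski[OF z] zernike_cheb_joukowski[OF z] ..
  then show "poly (zernike_poly M p) r = poly (zernike_cheb (M + 2 * p) p) r"
    using z by simp
qed

lemma zernikeR_eq_poly_zernike_cheb:
  assumes "\<bar>m\<bar> \<le> int n" and "even (int n - \<bar>m\<bar>)"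
  defines "p \<equiv> nat ((int n - \<bar>m\<bar>) div 2)"
  shows "2 * p \<le> n" and "zernikeR n m = poly (zernike_cheb n p)"
proof -
  have "2 * ((int n - \<bar>m\<bar>) div 2) = int n - \<bar>m\<bar>"
    using assms(2) by simp
  then have n: "n = nat \<bar>m\<bar> + 2 * p"
    using assms(1) unfolding p_def by linarith
  then show "2 * p \<le> n" by simp
  show "zernikeR n m = poly (zernike_cheb n p)"
    unfolding zernikeR_eq_poly_zernike_poly p_def[symmetric]
    by (subst n) (rule arg_cong[OF zernike_poly_eq_zernike_cheb])
qed

(* Krawtchouk symmetry turns binom(n,k) times the coefficient into binom(n,p) K_k(p)^2 / 2^n. *)
lemma zernike_cheb_coeff_nonneg:
  assumes "k \<le> n" and "p \<le> n"
  shows "0 \<le> zernike_cheb_coeff n p k"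
proof -
  have "real (n choose k) * (krawtchouk n k p * krawtchouk n p k)
      = real (n choose p) * (krawtchouk n k p)\<^sup>2"
    using krawtchouk_symmetry[OF assms] by (simp add: power2_eq_square mult_ac)
  then have "0 \<le> real (n choose k) * (krawtchouk n k p * krawtchouk n p k)"
    by simp
  moreover have "real (n choose k) > 0" using assms by simp
  ultimately have "0 \<le> krawtchouk n k p * krawtchouk n p k"
    by (simp add: zero_le_mult_iff)
  then show ?thesis by (simp add: zernike_cheb_coeff_def)
qed

lemma chebyshev_cone_zernike_cheb:
  assumes "p \<le> n"
  shows "chebyshev_cone (zernike_cheb n p)"
  unfolding zernike_cheb_def using zernike_cheb_coeff_nonneg assms
  by (intro chebyshev_cone_sum chebyshev_cone.smult chebyshev_cone.cheb_T) auto

lemma sum_zernike_cheb_coeff: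
  assumes "2 * p \<le> n"
  shows "(\<Sum>k\<le>n. zernike_cheb_coeff n p k) = 1"
proof -
  have "(\<Sum>k\<le>n. zernike_cheb_coeff n p k) = poly (zernike_cheb n p) 1"
    by (simp add: zernike_cheb_def poly_sum)
  also have "\<dots> = poly (zernike_poly (n - 2 * p) p) 1"
    using assms by (simp add: zernike_poly_eq_zernike_cheb)
  also have "\<dots> = 1"
    by (simp add: poly_zernike_poly sum.atMost_shift)
  finally show ?thesis .
qed

lemma zernike_cheb_coeff_0_plus_n:
  assumes "p \<le> n"
  shows "zernike_cheb_coeff n p 0 + zernike_cheb_coeff n p n = 2 * real (n choose p) / 2 ^ n"
proof -
  have "real (n choose p) * krawtchouk n n p = real (n choose p) * (-1) ^ p"
    using krawtchouk_symmetry[OF assms order_refl] by (simp add: krawtchouk_n_right)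
  then have "krawtchouk n n p = (-1) ^ p"
    using assms by simp
  then show ?thesis
    by (simp add: zernike_cheb_coeff_def krawtchouk_0_left krawtchouk_0_right krawtchouk_n_right
        power_add[symmetric] add_divide_distrib)
qed

theorem mainTheorem2:
  fixes n k :: nat and m :: int
  assumes "n \<ge> 1" and "\<bar>m\<bar> \<le> int n" and "even (int n - \<bar>m\<bar>)" and "k \<ge> 1"
  shows "(\<forall>r\<in>{0..1::real}. \<bar>(deriv ^^ k) (zernikeR n m) r\<bar> \<le> \<bar>(deriv ^^ k) (zernikeR n m) 1\<bar>)
         \<and> a_const n m * B_const n k \<le> (deriv ^^ k) (zernikeR n m) 1
         \<and> (deriv ^^ k) (zernikeR n m) 1 \<le> B_const n k"
proof -
  define p where "p = nat ((int n - \<bar>m\<bar>) div 2)"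
  have p: "2 * p \<le> n" and R: "zernikeR n m = poly (zernike_cheb n p)"
    using zernikeR_eq_poly_zernike_cheb[OF assms(2,3)] by (simp_all add: p_def)
  define c where "c = zernike_cheb_coeff n p"
  define d where "d i = nat \<bar>int n - 2 * int i\<bar>" for i
  define D where "D = (pderiv ^^ k) (zernike_cheb n p)"
  have D: "D = (pderiv ^^ k) (\<Sum>i\<le>n. smult (c i) (cheb_T (d i)))"
    by (simp add: D_def zernike_cheb_def c_def d_def)
  have c_nonneg: "0 \<le> c i" if "i \<in> {..n}" for i
    using that p zernike_cheb_coeff_nonneg by (simp add: c_def)
  have "\<bar>poly D r\<bar> \<le> \<bar>poly D 1\<bar>" if "r \<in> {0..1}" for r :: real
    using abs_poly_le_poly_1_if_chebyshev_cone[of D r] chebyshev_cone_zernike_cheb[of p n] that p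
    by (force simp: D_def intro: chebyshev_cone_higher_pderiv)
  moreover have "poly D 1 \<le> B_const n k"
    using higher_pderiv_cheb_sum_1_le[of "{..n}" c d n k] c_nonneg sum_zernike_cheb_coeff[OF p]
    by (simp add: D c_def d_def B_const_eq_higher_pderiv_cheb_T_1)
  moreover have "a_const n m * B_const n k \<le> poly D 1"
  proof -
    have "sum c {0, n} = a_const n m"
      using assms(1) zernike_cheb_coeff_0_plus_n[of p n] p
      by (simp add: c_def a_const_def p_def power_one_over)
    moreover have "d i = n" if "i \<in> {0, n}" for i
      using that by (auto simp: d_def)
    ultimately show ?thesis
      using higher_pderiv_cheb_sum_1_ge[of "{..n}" "{0, n}" c d n k] c_nonneg assms(1)
      by (simp add: D B_const_eq_higher_pderiv_cheb_T_1)
  qed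
  ultimately show ?thesis
    unfolding R higher_deriv_poly D_def[symmetric] by blast
qed

end
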